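(* Let $\Theta$ and $\Theta'$ be causally complete spaces of input histories with $E^\Theta\cap E^{\Theta'}=\emptyset$. Then the parallel composition $\Theta\cup\Theta'$ and the sequential composition $\Theta\rightsquigarrow\Theta'$ are causally complete.
   Context: A partial function is a function $f$ with domain $\mathrm{dom}(f)$ a subset of an index set, values in given sets; ordered by restriction. Compatible = agreeing on common domain; a compatible set $\mathcal F$ has join $\bigvee\mathcal F$ (union); $k\vee h$ is the join of two compatible functions. $\Theta$ is $\vee$-prime if for compatible $\mathcal F\subseteq\Theta$ with $\bigvee\mathcal F\in\Theta$ we have $\bigvee\mathcal F\in\mathcal F$. A space of input histories is a finite $\vee$-prime set of partial functions; $E^\Theta=\bigcup_{h\in\Theta}\mathrm{dom}(h)$, $I^\Theta_\omega=\{h(\omega):h\in\Theta,\omega\in\mathrm{dom}(h)\}$, $\mathrm{Ext}(\Theta)=\{\bigvee\mathcal F:\emptyset\ne\mathcal F\subseteq\Theta\text{ compatible}\}$. Free-choice: maximal elements of $\mathrm{Ext}(\Theta)$ are exactly the total functions in $\prod_{\omega\in E^\Theta}I^\Theta_\omega$. $\mathrm{tips}_\Theta(h)=\mathrm{dom}(h)\setminus\bigcup\{\mathrm{dom}(k):k\in\mathrm{Ext}(\Theta),k<h\}$. Causally complete: free-choice and $|\mathrm{tips}_\Theta(h)|=1$ for all $h\in\Theta$. For spaces with disjoint event sets, the parallel composition is the union $\Theta\cup\Theta'$ and the sequential composition is $\Theta\rightsquigarrow\Theta'=\Theta\cup\{k\vee h':k\in\max\mathrm{Ext}(\Theta),\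 h'\in\Theta'\}$. *)

theory Defs
  imports Main
begin

text \<open>Partial functions from events 'e to values 'v are maps 'e \<rightharpoonup> 'v.
  The order is restriction (map_le).\<close>

definition compatible :: "('e \<rightharpoonup> 'v) set \<Rightarrow> bool" where
  "compatible F \<longleftrightarrow> (\<forall>f\<in>F. \<forall>g\<in>F. \<forall>\<omega>\<in>dom f \<inter> dom g. f \<omega> = g \<omega>)"

definition join :: "('e \<rightharpoonup> 'v) set \<Rightarrow> ('e \<rightharpoonup> 'v)" where
  "join F = (\<lambda>\<omega>. if \<exists>f\<in>F. \<omega> \<in> dom f
                 then (SOME f. f \<in> F \<and> \<omega> \<in> dom f) \<omega> else None)"

definition join2 :: "('e \<rightharpoonup> 'v) \<Rightarrow> ('e \<rightharpoonup> 'v) \<Rightarrow> ('e \<rightharpoonup> 'v)" where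
  "join2 k h = join {k, h}"

definition join_prime :: "('e \<rightharpoonup> 'v) set \<Rightarrow> bool" where
  "join_prime \<Theta> \<longleftrightarrow>
     (\<forall>F. F \<subseteq> \<Theta> \<longrightarrow> compatible F \<longrightarrow> join F \<in> \<Theta> \<longrightarrow> join F \<in> F)"

definition space_of_input_histories :: "('e \<rightharpoonup> 'v) set \<Rightarrow> bool" where
  "space_of_input_histories \<Theta> \<longleftrightarrow> finite \<Theta> \<and> join_prime \<Theta>"

definition events :: "('e \<rightharpoonup> 'v) set \<Rightarrow> 'e set" where
  "events \<Theta> = (\<Union>h\<in>\<Theta>. dom h)"

definition inputs :: "('e \<rightharpoonup> 'v) set \<Rightarrow> 'e \<Rightarrow> 'v set" where
  "inputs \<Theta> \<omega> = {v. \<exists>h\<in>\<Theta>. \<omega> \<in> dom h \<and> h \<omega> = Some v}"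

definition Ext :: "('e \<rightharpoonup> 'v) set \<Rightarrow> ('e \<rightharpoonup> 'v) set" where
  "Ext \<Theta> = {join F | F. F \<noteq> {} \<and> F \<subseteq> \<Theta> \<and> compatible F}"

definition maximals :: "('e \<rightharpoonup> 'v) set \<Rightarrow> ('e \<rightharpoonup> 'v) set" where
  "maximals S = {h \<in> S. \<forall>k\<in>S. h \<subseteq>\<^sub>m k \<longrightarrow> k = h}"

definition free_choice :: "('e \<rightharpoonup> 'v) set \<Rightarrow> bool" where
  "free_choice \<Theta> \<longleftrightarrow>
     maximals (Ext \<Theta>) =
       {h. dom h = events \<Theta> \<and> (\<forall>\<omega>\<in>events \<Theta>. the (h \<omega>) \<in> inputs \<Theta> \<omega>)}"

definition tips :: "('e \<rightharpoonup> 'v) set \<Rightarrow> ('e \<rightharpoonup> 'v) \<Rightarrow> 'e set" where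
  "tips \<Theta> h = dom h - (\<Union>{dom k | k. k \<in> Ext \<Theta> \<and> k \<subseteq>\<^sub>m h \<and> k \<noteq> h})"

definition causally_complete :: "('e \<rightharpoonup> 'v) set \<Rightarrow> bool" where
  "causally_complete \<Theta> \<longleftrightarrow> free_choice \<Theta> \<and> (\<forall>h\<in>\<Theta>. card (tips \<Theta> h) = 1)"

definition par_comp :: "('e \<rightharpoonup> 'v) set \<Rightarrow> ('e \<rightharpoonup> 'v) set \<Rightarrow> ('e \<rightharpoonup> 'v) set" where
  "par_comp \<Theta> \<Theta>' = \<Theta> \<union> \<Theta>'"

definition seq_comp :: "('e \<rightharpoonup> 'v) set \<Rightarrow> ('e \<rightharpoonup> 'v) set \<Rightarrow> ('e \<rightharpoonup> 'v) set" where
  "seq_comp \<Theta> \<Theta>' = \<Theta> \<union> {join2 k h' | k h'. k \<in> maximals (Ext \<Theta>) \<and> h' \<in> \<Theta>'}"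

end

(*
  An extension of \<Theta> is exactly a map that is covered by the histories of \<Theta> below it
  (Ext_iff). Consequently tips only depend on the histories strictly below a given one, and
  for finite \<Theta> free choice means: every total history is an extension and every
  extension lies below a total history.

  For disjoint event sets a total history of \<Theta> \<union> \<Theta>' is a ++ b with a, b total
  histories of \<Theta>, \<Theta>'; an upper bound of an extension is assembled from upper bounds in
  the two components, and a history of one space is never strictly above a nonempty
  history of the other, so tips do not change.

  For \<Theta> \<rightsquigarrow> \<Theta>' all new histories k ++ h' below a common map share the same
  total prefix k, since total histories of \<Theta> have the same domain. Below k ++ h' the
  new histories are the k ++ h'' with h'' below h', while the events of k are covered by
  histories of \<Theta>; hence the tip of k ++ h' is the tip of h' in \<Theta>'.
*)
theory Submission
  imports Defs
begin

lemma map_le_map_add_left: "dom f \<inter> dom g = {} \<Longrightarrow> f \<subseteq>\<^sub>m f ++ g"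
  by (metis map_add_comm map_le_map_add)

lemma map_le_of_common_bound: "f \<subseteq>\<^sub>m e \<Longrightarrow> k \<subseteq>\<^sub>m e \<Longrightarrow> dom f \<subseteq> dom k \<Longrightarrow> f \<subseteq>\<^sub>m k"
  unfolding map_le_def by (metis subsetD)

lemma map_le_antisym_dom: "f \<subseteq>\<^sub>m g \<Longrightarrow> dom g \<subseteq> dom f \<Longrightarrow> f = g"
  by (metis map_le_antisym map_le_of_common_bound map_le_refl)

lemma map_add_le_map_add_iff:
  assumes "dom k \<inter> dom g = {}" "dom k \<inter> dom g' = {}"
  shows "k ++ g \<subseteq>\<^sub>m k ++ g' \<longleftrightarrow> g \<subseteq>\<^sub>m g'"
proof
  assume le: "k ++ g \<subseteq>\<^sub>m k ++ g'"
  have "dom g \<subseteq> dom g'"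
    using map_le_implies_dom_le[OF le] assms(1) by auto
  then show "g \<subseteq>\<^sub>m g'"
    using map_le_of_common_bound map_le_trans[OF map_le_map_add le] map_le_map_add by blast
next
  assume "g \<subseteq>\<^sub>m g'"
  then have "g \<subseteq>\<^sub>m k ++ g'"
    using map_le_map_add map_le_trans by blast
  then show "k ++ g \<subseteq>\<^sub>m k ++ g'"
    using map_le_map_add_left[OF assms(2)] by (rule map_add_le_mapI[rotated])
qed

lemma maximal_above:
  assumes "finite S" "e \<in> S"
  shows "\<exists>m\<in>maximals S. e \<subseteq>\<^sub>m m"
proof -
  let ?less = "\<lambda>f g. f \<subseteq>\<^sub>m g \<and> f \<noteq> g"
  have "asymp_on S ?less"
    by (auto intro: asymp_onI dest: map_le_antisym)
  moreover have "transp_on S ?less"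
    by (auto intro!: transp_onI dest: map_le_antisym map_le_trans)
  moreover have "\<exists>k\<in>S. e \<subseteq>\<^sub>m k"
    using assms(2) map_le_refl by blast
  ultimately obtain m where m: "m \<in> S" "e \<subseteq>\<^sub>m m" "\<forall>k\<in>S. ?less m k \<longrightarrow> \<not> e \<subseteq>\<^sub>m k"
    using Finite_Set.bex_max_element_with_property[OF assms(1)] by blast
  then have "m \<in> maximals S"
    unfolding maximals_def using map_le_trans by blast
  then show ?thesis
    using m(2) by blast
qed

section \<open>Joins and extensions\<close>

lemma join_apply:
  assumes "f \<in> F" "\<omega> \<in> dom f"
  obtains g where "g \<in> F" "\<omega> \<in> dom g" "join F \<omega> = g \<omega>"
proof -
  have ex: "\<exists>g\<in>F. \<omega> \<in> dom g"
    using assms by blast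
  let ?g = "SOME g. g \<in> F \<and> \<omega> \<in> dom g"
  have "?g \<in> F \<and> \<omega> \<in> dom ?g"
    using ex by (metis (mono_tags, lifting) someI_ex)
  moreover have "join F \<omega> = ?g \<omega>"
    using ex unfolding join_def by simp
  ultimately show thesis
    using that by blast
qed

lemma dom_join: "dom (join F) = (\<Union>f\<in>F. dom f)"
proof (intro equalityI subsetI)
  fix \<omega> assume \<omega>: "\<omega> \<in> dom (join F)"
  show "\<omega> \<in> (\<Union>f\<in>F. dom f)"
  proof (rule ccontr)
    assume "\<omega> \<notin> (\<Union>f\<in>F. dom f)"
    then have "join F \<omega> = None"
      unfolding join_def by auto
    then show False
      using \<omega> by auto
  qed
next
  fix \<omega> assume "\<omega> \<in> (\<Union>f\<in>F. dom f)"
  then obtain f where "f \<in> F" "\<omega> \<in> dom f" by blast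
  then obtain g where "\<omega> \<in> dom g" "join F \<omega> = g \<omega>"
    by (rule join_apply)
  then show "\<omega> \<in> dom (join F)"
    by auto
qed

lemma map_le_join:
  assumes "compatible F" "f \<in> F"
  shows "f \<subseteq>\<^sub>m join F"
  unfolding map_le_def
proof
  fix \<omega> assume "\<omega> \<in> dom f"
  then obtain g where "g \<in> F" "\<omega> \<in> dom g" "join F \<omega> = g \<omega>"
    by (rule join_apply[OF assms(2)])
  then show "f \<omega> = join F \<omega>"
    using assms \<open>\<omega> \<in> dom f\<close> unfolding compatible_def by (metis IntI)
qed

lemma join_eqI:
  assumes "\<forall>f\<in>F. f \<subseteq>\<^sub>m t" "dom t \<subseteq> (\<Union>f\<in>F. dom f)"
  shows "join F = t"
proof
  fix \<omega>
  show "join F \<omega> = t \<omega>"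
  proof (cases "\<omega> \<in> (\<Union>f\<in>F. dom f)")
    case True
    then obtain f where "f \<in> F" "\<omega> \<in> dom f" by blast
    then obtain g where "g \<in> F" "\<omega> \<in> dom g" "join F \<omega> = g \<omega>"
      by (rule join_apply)
    then show ?thesis
      using assms(1) unfolding map_le_def by metis
  next
    case False
    then have "\<omega> \<notin> dom t" "\<omega> \<notin> dom (join F)"
      using assms(2) dom_join[of F] by blast+
    then show ?thesis
      by (simp add: domIff)
  qed
qed

lemma compatible_if_bounded: "\<forall>f\<in>F. f \<subseteq>\<^sub>m t \<Longrightarrow> compatible F"
  unfolding compatible_def map_le_def by (metis IntD1 IntD2)

lemma join_empty: "join {} = Map.empty"
  unfolding join_def by simp

lemma join_prime_imp_empty_notin:
  assumes "join_prime X"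
  shows "Map.empty \<notin> X"
proof
  assume "Map.empty \<in> X"
  have "compatible {}"
    unfolding compatible_def by simp
  then have "join {} \<in> X \<longrightarrow> join {} \<in> {}"
    using assms unfolding join_prime_def by blast
  then show False
    using \<open>Map.empty \<in> X\<close> by (simp add: join_empty)
qed

lemma join2_map_add: "dom k \<inter> dom h = {} \<Longrightarrow> join2 k h = k ++ h"
  unfolding join2_def by (rule join_eqI) (simp_all add: map_le_map_add_left)

lemma join_in_Ext: "F \<noteq> {} \<Longrightarrow> F \<subseteq> X \<Longrightarrow> compatible F \<Longrightarrow> join F \<in> Ext X"
  unfolding Ext_def by blast

lemma Ext_iff:
  "t \<in> Ext X \<longleftrightarrow> (\<exists>g\<in>X. g \<subseteq>\<^sub>m t) \<and> dom t \<subseteq> (\<Union>g\<in>{g\<in>X. g \<subseteq>\<^sub>m t}. dom g)"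
proof
  assume "t \<in> Ext X"
  then obtain F where F: "t = join F" "F \<noteq> {}" "F \<subseteq> X" "compatible F"
    unfolding Ext_def by blast
  have below: "\<forall>f\<in>F. f \<subseteq>\<^sub>m t"
    using map_le_join[OF F(4)] F(1) by simp
  have "dom t = (\<Union>f\<in>F. dom f)"
    using F(1) dom_join by simp
  then show "(\<exists>g\<in>X. g \<subseteq>\<^sub>m t) \<and> dom t \<subseteq> (\<Union>g\<in>{g\<in>X. g \<subseteq>\<^sub>m t}. dom g)"
    using F(2,3) below by auto
next
  assume "(\<exists>g\<in>X. g \<subseteq>\<^sub>m t) \<and> dom t \<subseteq> (\<Union>g\<in>{g\<in>X. g \<subseteq>\<^sub>m t}. dom g)"
  moreover define G where "G = {g\<in>X. g \<subseteq>\<^sub>m t}"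
  ultimately have G: "G \<noteq> {}" "G \<subseteq> X" "\<forall>g\<in>G. g \<subseteq>\<^sub>m t" "dom t \<subseteq> (\<Union>g\<in>G. dom g)"
    by auto
  then have "join G = t"
    by (intro join_eqI)
  then show "t \<in> Ext X"
    using join_in_Ext[OF G(1,2) compatible_if_bounded[OF G(3)]] by simp
qed

lemma subset_Ext: "X \<subseteq> Ext X"
proof
  fix g assume "g \<in> X"
  then show "g \<in> Ext X"
    unfolding Ext_iff using map_le_refl[of g] by blast
qed

lemma dom_Ext_subset_events: "t \<in> Ext X \<Longrightarrow> dom t \<subseteq> events X"
  unfolding Ext_iff events_def by blast

lemma Ext_mono: "A \<subseteq> B \<Longrightarrow> Ext A \<subseteq> Ext B"
  unfolding Ext_def by blast

lemma map_le_iff_Ext_below: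
  assumes "e \<in> Ext X"
  shows "e \<subseteq>\<^sub>m t \<longleftrightarrow> (\<forall>g\<in>X. g \<subseteq>\<^sub>m e \<longrightarrow> g \<subseteq>\<^sub>m t)"
proof
  assume below: "\<forall>g\<in>X. g \<subseteq>\<^sub>m e \<longrightarrow> g \<subseteq>\<^sub>m t"
  show "e \<subseteq>\<^sub>m t"
    unfolding map_le_def
  proof
    fix \<omega> assume "\<omega> \<in> dom e"
    then obtain g where "g \<in> X" "g \<subseteq>\<^sub>m e" "\<omega> \<in> dom g"
      using assms unfolding Ext_iff by blast
    then show "e \<omega> = t \<omega>"
      using below unfolding map_le_def by metis
  qed
qed (use map_le_trans in blast)

lemma finite_Ext: "finite X \<Longrightarrow> finite (Ext X)"
  by (rule finite_subset[of _ "join ` Pow X"]) (auto simp: Ext_def)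

lemma Ext_Un_map_add:
  assumes "a \<in> Ext A" "b \<in> Ext B" "dom a \<inter> dom b = {}"
  shows "a ++ b \<in> Ext (A \<union> B)"
proof -
  let ?below = "\<lambda>X t. {g\<in>X. g \<subseteq>\<^sub>m t}"
  have "a \<subseteq>\<^sub>m a ++ b" "b \<subseteq>\<^sub>m a ++ b"
    using assms(3) by (simp_all add: map_le_map_add_left)
  then have sub: "?below A a \<union> ?below B b \<subseteq> ?below (A \<union> B) (a ++ b)"
    by (auto intro: map_le_trans)
  have "?below A a \<noteq> {}"
    using assms(1) unfolding Ext_iff by blast
  then have "\<exists>g\<in>A \<union> B. g \<subseteq>\<^sub>m a ++ b"
    using sub by blast
  moreover have "dom (a ++ b) \<subseteq> (\<Union>g\<in>?below A a \<union> ?below B b. dom g)"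
    using assms(1,2) unfolding Ext_iff by auto
  moreover have "\<dots> \<subseteq> (\<Union>g\<in>?below (A \<union> B) (a ++ b). dom g)"
    using sub by (rule UN_mono) simp
  ultimately show ?thesis
    unfolding Ext_iff by (meson order_trans)
qed

lemma Ext_map_add_image:
  assumes "b \<in> Ext B" "dom a \<inter> dom b = {}"
  shows "a ++ b \<in> Ext ((++) a ` B)"
proof -
  let ?below = "{g\<in>B. g \<subseteq>\<^sub>m b}"
  obtain g0 where g0: "g0 \<in> ?below"
    using assms(1) unfolding Ext_iff by blast
  have "a ++ g \<subseteq>\<^sub>m a ++ b" if "g \<subseteq>\<^sub>m b" for g
    using map_le_map_add_left[OF assms(2)] map_le_trans[OF that map_le_map_add]
    by (rule map_add_le_mapI)
  then have sub: "(++) a ` ?below \<subseteq> {g\<in>(++) a ` B. g \<subseteq>\<^sub>m a ++ b}"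
    by blast
  have "dom b \<subseteq> (\<Union>g\<in>?below. dom g)"
    using assms(1) unfolding Ext_iff by blast
  then have "dom (a ++ b) \<subseteq> (\<Union>g\<in>(++) a ` ?below. dom g)"
    using g0 by auto
  also have "\<dots> \<subseteq> (\<Union>g\<in>{g\<in>(++) a ` B. g \<subseteq>\<^sub>m a ++ b}. dom g)"
    using sub by (rule UN_mono) simp
  finally show ?thesis
    unfolding Ext_iff using g0 sub by blast
qed

lemma tips_eq: "tips X h = dom h - (\<Union>g\<in>{g\<in>X. g \<subseteq>\<^sub>m h \<and> g \<noteq> h}. dom g)"
proof -
  have "\<Union>{dom k | k. k \<in> Ext X \<and> k \<subseteq>\<^sub>m h \<and> k \<noteq> h} = (\<Union>g\<in>{g\<in>X. g \<subseteq>\<^sub>m h \<and> g \<noteq> h}. dom g)"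
  proof (intro equalityI subsetI)
    fix \<omega> assume "\<omega> \<in> \<Union>{dom k | k. k \<in> Ext X \<and> k \<subseteq>\<^sub>m h \<and> k \<noteq> h}"
    then obtain k where k: "k \<in> Ext X" "k \<subseteq>\<^sub>m h" "k \<noteq> h" "\<omega> \<in> dom k"
      by blast
    then obtain g where g: "g \<in> X" "g \<subseteq>\<^sub>m k" "\<omega> \<in> dom g"
      unfolding Ext_iff by blast
    have "g \<noteq> h"
      using g(2) k(2,3) map_le_antisym by blast
    then show "\<omega> \<in> (\<Union>g\<in>{g\<in>X. g \<subseteq>\<^sub>m h \<and> g \<noteq> h}. dom g)"
      using g k(2) map_le_trans by blast
  next
    fix \<omega> assume "\<omega> \<in> (\<Union>g\<in>{g\<in>X. g \<subseteq>\<^sub>m h \<and> g \<noteq> h}. dom g)"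
    then obtain g where "g \<in> X" "g \<subseteq>\<^sub>m h" "g \<noteq> h" "\<omega> \<in> dom g"
      by blast
    moreover have "g \<in> Ext X"
      using \<open>g \<in> X\<close> subset_Ext by blast
    ultimately show "\<omega> \<in> \<Union>{dom k | k. k \<in> Ext X \<and> k \<subseteq>\<^sub>m h \<and> k \<noteq> h}"
      by blast
  qed
  then show ?thesis
    unfolding tips_def by simp
qed

lemma tips_subset_dom: "tips X h \<subseteq> dom h"
  unfolding tips_def by blast

lemma tips_Un: "tips (A \<union> B) h = tips A h \<inter> tips B h"
  unfolding tips_eq by blast

lemma tips_eq_dom:
  assumes "\<And>g. g \<in> X \<Longrightarrow> g \<subseteq>\<^sub>m h \<Longrightarrow> g \<noteq> h \<Longrightarrow> dom g = {}"
  shows "tips X h = dom h"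
  unfolding tips_eq using assms by blast

lemma tips_Un_eq_left: "tips B h = dom h \<Longrightarrow> tips (A \<union> B) h = tips A h"
  using tips_Un[of A B h] tips_subset_dom[of A h] by (simp add: Int_absorb2)

lemma tips_cong_below:
  assumes "{g\<in>X. g \<subseteq>\<^sub>m h} = {g\<in>Y. g \<subseteq>\<^sub>m h}"
  shows "tips X h = tips Y h"
proof -
  have "{g\<in>X. g \<subseteq>\<^sub>m h \<and> g \<noteq> h} = {g\<in>Y. g \<subseteq>\<^sub>m h \<and> g \<noteq> h}"
    using assms by blast
  then show ?thesis
    unfolding tips_eq by simp
qed

section \<open>Total histories and free choice\<close>

lemma dom_subset_events: "h \<in> X \<Longrightarrow> dom h \<subseteq> events X"
  unfolding events_def by (rule UN_upper)

lemma events_Un: "events (A \<union> B) = events A \<union> events B"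
  unfolding events_def by (rule UN_Un)

lemma inputs_Un: "inputs (A \<union> B) \<omega> = inputs A \<omega> \<union> inputs B \<omega>"
  unfolding inputs_def by auto

lemma in_inputs: "h \<in> X \<Longrightarrow> h \<omega> = Some v \<Longrightarrow> v \<in> inputs X \<omega>"
  unfolding inputs_def by blast

lemma inputs_outside_events: "\<omega> \<notin> events X \<Longrightarrow> inputs X \<omega> = {}"
  unfolding inputs_def events_def by blast

definition total_histories :: "('e \<rightharpoonup> 'v) set \<Rightarrow> ('e \<rightharpoonup> 'v) set" where
  "total_histories X = {h. dom h = events X \<and> (\<forall>\<omega>\<in>events X. the (h \<omega>) \<in> inputs X \<omega>)}"

lemma dom_total_histories: "t \<in> total_histories X \<Longrightarrow> dom t = events X"
  unfolding total_histories_def by simp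

lemma total_histories_below_eq:
  assumes "k \<in> total_histories A" "k' \<in> total_histories A" "k \<subseteq>\<^sub>m e" "k' \<subseteq>\<^sub>m e"
  shows "k = k'"
  using assms dom_total_histories by (metis map_le_antisym_dom map_le_of_common_bound order_refl)

lemma total_histories_nonempty: "total_histories X \<noteq> {}"
proof -
  have "inputs X \<omega> \<noteq> {}" if "\<omega> \<in> events X" for \<omega>
    using that unfolding events_def inputs_def by blast
  then have "(\<lambda>\<omega>. if \<omega> \<in> events X then Some (SOME v. v \<in> inputs X \<omega>) else None) \<in> total_histories X"
    unfolding total_histories_def by (auto simp: dom_def some_in_eq)
  then show ?thesis
    by blast
qed

lemma maximals_Ext_eq: "free_choice X \<Longrightarrow> maximals (Ext X) = total_histories X"
  unfolding free_choice_def total_histories_def by simp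

lemma total_histories_subset_Ext: "free_choice X \<Longrightarrow> total_histories X \<subseteq> Ext X"
  unfolding maximals_Ext_eq[symmetric] maximals_def by blast

lemma total_above_Ext:
  assumes "finite X" "free_choice X" "e \<in> Ext X"
  shows "\<exists>t\<in>total_histories X. e \<subseteq>\<^sub>m t"
  using maximal_above[OF finite_Ext[OF assms(1)] assms(3)] maximals_Ext_eq[OF assms(2)] by simp

lemma free_choiceI:
  assumes total: "total_histories X \<subseteq> Ext X"
    and above: "\<And>e. e \<in> Ext X \<Longrightarrow> \<exists>t\<in>total_histories X. e \<subseteq>\<^sub>m t"
  shows "free_choice X"
proof -
  have "t \<in> maximals (Ext X)" if t: "t \<in> total_histories X" for t
  proof -
    have "t = k" if "k \<in> Ext X" "t \<subseteq>\<^sub>m k" for k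
      using dom_Ext_subset_events[OF that(1)] dom_total_histories[OF t] that(2)
      by (simp add: map_le_antisym_dom)
    then show ?thesis
      unfolding maximals_def using t total by auto
  qed
  moreover have "m \<in> total_histories X" if m: "m \<in> maximals (Ext X)" for m
  proof -
    obtain t where "t \<in> total_histories X" "m \<subseteq>\<^sub>m t"
      using m above unfolding maximals_def by blast
    moreover have "t \<in> Ext X"
      using total \<open>t \<in> total_histories X\<close> by blast
    ultimately show ?thesis
      using m unfolding maximals_def by auto
  qed
  ultimately show "free_choice X"
    unfolding free_choice_def total_histories_def[symmetric] by blast
qed

lemma total_upper_bound:
  assumes "finite X" "free_choice X"
  shows "\<exists>t\<in>total_histories X. \<forall>g\<in>X. g \<subseteq>\<^sub>m e \<longrightarrow> g \<subseteq>\<^sub>m t"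
proof (cases "\<exists>g\<in>X. g \<subseteq>\<^sub>m e")
  case True
  define G where "G = {g\<in>X. g \<subseteq>\<^sub>m e}"
  have "compatible G"
    unfolding G_def by (rule compatible_if_bounded) blast
  moreover have "G \<noteq> {}" "G \<subseteq> X"
    using True unfolding G_def by auto
  ultimately have "join G \<in> Ext X"
    by (intro join_in_Ext)
  then obtain t where "t \<in> total_histories X" "join G \<subseteq>\<^sub>m t"
    using total_above_Ext assms by blast
  then show ?thesis
    using map_le_join[OF \<open>compatible G\<close>] map_le_trans unfolding G_def by blast
next
  case False
  then show ?thesis
    using total_histories_nonempty by auto
qed

lemma restrict_total_histories_Un:
  assumes "t \<in> total_histories (A \<union> B)" "events A \<inter> events B = {}"
  shows "t |` events A \<in> total_histories A"
  unfolding total_histories_def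
proof (intro CollectI conjI ballI)
  show "dom (t |` events A) = events A"
    using assms(1) unfolding total_histories_def events_Un by auto
next
  fix \<omega> assume "\<omega> \<in> events A"
  then have "the (t \<omega>) \<in> inputs A \<omega> \<union> inputs B \<omega>" "inputs B \<omega> = {}"
    using assms inputs_outside_events[of \<omega> B]
    unfolding total_histories_def events_Un inputs_Un by auto
  then show "the ((t |` events A) \<omega>) \<in> inputs A \<omega>"
    using \<open>\<omega> \<in> events A\<close> by simp
qed

lemma total_histories_Un:
  assumes "events A \<inter> events B = {}"
  shows "total_histories (A \<union> B) = {a ++ b | a b. a \<in> total_histories A \<and> b \<in> total_histories B}"
proof (intro equalityI subsetI)
  fix t assume t: "t \<in> total_histories (A \<union> B)"
  have "t |` events A \<in> total_histories A" "t |` events B \<in> total_histories B"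
    using restrict_total_histories_Un[OF t assms]
      restrict_total_histories_Un[of t B A] t assms by (auto simp: Un_commute Int_commute)
  moreover have "t = t |` events A ++ t |` events B"
    using t unfolding total_histories_def events_Un
    by (auto simp: fun_eq_iff map_add_def restrict_map_def split: option.splits)
  ultimately show "t \<in> {a ++ b | a b. a \<in> total_histories A \<and> b \<in> total_histories B}"
    by blast
next
  fix t assume "t \<in> {a ++ b | a b. a \<in> total_histories A \<and> b \<in> total_histories B}"
  then obtain a b where t: "t = a ++ b" and ab: "a \<in> total_histories A" "b \<in> total_histories B"
    by blast
  then have dom: "dom a = events A" "dom b = events B"
    unfolding total_histories_def by auto
  have "t \<omega> = a \<omega>" if "\<omega> \<in> events A" for \<omega>
  proof -
    have "\<omega> \<notin> dom b"
      using that assms dom by blast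
    then show ?thesis
      using t by (simp add: map_add_dom_app_simps)
  qed
  moreover have "t \<omega> = b \<omega>" if "\<omega> \<in> events B" for \<omega>
    using that dom t by (auto simp: map_add_dom_app_simps)
  ultimately show "t \<in> total_histories (A \<union> B)"
    using ab dom t unfolding total_histories_def events_Un inputs_Un by auto
qed

lemma dom_disjoint_if_total:
  assumes "k \<in> total_histories A" "h \<in> B" "events A \<inter> events B = {}"
  shows "dom k \<inter> dom h = {}"
  using dom_total_histories[OF assms(1)] dom_subset_events[OF assms(2)] assms(3) by blast

section \<open>Parallel composition\<close>

lemma total_histories_Un_subset_Ext:
  assumes "free_choice A" "free_choice B" "events A \<inter> events B = {}"
  shows "total_histories (A \<union> B) \<subseteq> Ext (A \<union> B)"
proof
  fix t assume "t \<in> total_histories (A \<union> B)"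
  then obtain a b where t: "t = a ++ b" and ab: "a \<in> total_histories A" "b \<in> total_histories B"
    unfolding total_histories_Un[OF assms(3)] by blast
  have "dom a \<inter> dom b = {}"
    using assms(3) dom_total_histories[OF ab(1)] dom_total_histories[OF ab(2)] by simp
  moreover have "a \<in> Ext A" "b \<in> Ext B"
    using ab total_histories_subset_Ext assms(1,2) by blast+
  ultimately show "t \<in> Ext (A \<union> B)"
    using Ext_Un_map_add t by simp
qed

lemma free_choice_Un:
  assumes "finite A" "finite B" "free_choice A" "free_choice B" "events A \<inter> events B = {}"
  shows "free_choice (A \<union> B)"
  using total_histories_Un_subset_Ext[OF assms(3-5)]
proof (rule free_choiceI)
  fix e assume e: "e \<in> Ext (A \<union> B)"
  obtain a where a: "a \<in> total_histories A" "\<forall>g\<in>A. g \<subseteq>\<^sub>m e \<longrightarrow> g \<subseteq>\<^sub>m a"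
    using total_upper_bound[OF assms(1,3)] by blast
  obtain b where b: "b \<in> total_histories B" "\<forall>g\<in>B. g \<subseteq>\<^sub>m e \<longrightarrow> g \<subseteq>\<^sub>m b"
    using total_upper_bound[OF assms(2,4)] by blast
  have "a \<subseteq>\<^sub>m a ++ b"
    using assms(5) dom_total_histories[OF a(1)] dom_total_histories[OF b(1)]
    by (intro map_le_map_add_left) simp
  then have "\<forall>g\<in>A \<union> B. g \<subseteq>\<^sub>m e \<longrightarrow> g \<subseteq>\<^sub>m a ++ b"
    using a(2) b(2) by (metis Un_iff map_le_trans map_le_map_add)
  then have "e \<subseteq>\<^sub>m a ++ b"
    using map_le_iff_Ext_below[OF e] by simp
  moreover have "a ++ b \<in> total_histories (A \<union> B)"
    unfolding total_histories_Un[OF assms(5)] using a(1) b(1) by blast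
  ultimately show "\<exists>t\<in>total_histories (A \<union> B). e \<subseteq>\<^sub>m t"
    by blast
qed

lemma tips_Un_disjoint:
  assumes "dom h \<inter> events B = {}"
  shows "tips (A \<union> B) h = tips A h"
proof -
  have "tips B h = dom h"
  proof (rule tips_eq_dom)
    fix g assume "g \<in> B" "g \<subseteq>\<^sub>m h"
    then have "dom g \<subseteq> dom h \<inter> events B"
      using map_le_implies_dom_le dom_subset_events by (metis le_inf_iff)
    then show "dom g = {}"
      using assms by blast
  qed
  then show ?thesis
    by (rule tips_Un_eq_left)
qed

lemma causally_complete_Un:
  assumes "finite A" "finite B" "causally_complete A" "causally_complete B"
    and "events A \<inter> events B = {}"
  shows "causally_complete (A \<union> B)"
proof -
  have "tips (A \<union> B) h = tips A h" if "h \<in> A" for h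
    using dom_subset_events[OF that] assms(5) by (intro tips_Un_disjoint) blast
  moreover have "tips (A \<union> B) h = tips B h" if "h \<in> B" for h
  proof -
    have "dom h \<inter> events A = {}"
      using dom_subset_events[OF that] assms(5) by blast
    then show ?thesis
      using tips_Un_disjoint[of h A B] by (simp add: Un_commute)
  qed
  ultimately show ?thesis
    using assms free_choice_Un unfolding causally_complete_def by auto
qed

section \<open>Sequential composition\<close>

definition continuations :: "('e \<rightharpoonup> 'v) set \<Rightarrow> ('e \<rightharpoonup> 'v) set \<Rightarrow> ('e \<rightharpoonup> 'v) set" where
  "continuations A B = {k ++ h | k h. k \<in> total_histories A \<and> h \<in> B}"

lemma seq_comp_eq:
  assumes "free_choice A" "events A \<inter> events B = {}"
  shows "seq_comp A B = A \<union> continuations A B"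
proof -
  have "join2 k h = k ++ h" if "k \<in> total_histories A" "h \<in> B" for k h
    using assms(2) dom_total_histories[OF that(1)] dom_subset_events[OF that(2)]
    by (intro join2_map_add) blast
  moreover have "maximals (Ext A) = total_histories A"
    using assms(1) by (rule maximals_Ext_eq)
  ultimately show ?thesis
    unfolding seq_comp_def continuations_def by auto metis
qed

lemma events_continuations: "events (A \<union> continuations A B) = events (A \<union> B)"
proof -
  obtain k where k: "k \<in> total_histories A"
    using total_histories_nonempty by auto
  have "events (continuations A B) \<subseteq> events A \<union> events B"
    unfolding continuations_def events_def
    using dom_total_histories unfolding events_def by fastforce
  moreover have "events B \<subseteq> events (continuations A B)"
    unfolding continuations_def events_def using k by fastforce
  ultimately show ?thesis
    unfolding events_Un by blast
qed

lemma inputs_continuations: "inputs (A \<union> continuations A B) \<omega> = inputs (A \<union> B) \<omega>"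
proof -
  have "v \<in> inputs A \<omega> \<union> inputs B \<omega>" if v: "v \<in> inputs (continuations A B) \<omega>" for v
  proof -
    obtain g where g: "g \<in> continuations A B" "g \<omega> = Some v"
      using v unfolding inputs_def by blast
    then obtain k h where "g = k ++ h" "k \<in> total_histories A" "h \<in> B"
      unfolding continuations_def by blast
    with g have kh: "k \<in> total_histories A" "h \<in> B" "(k ++ h) \<omega> = Some v"
      by simp_all
    show ?thesis
    proof (cases "\<omega> \<in> dom h")
      case True
      then have "h \<omega> = Some v"
        using kh(3) by (simp add: map_add_dom_app_simps)
      then show ?thesis
        using kh(2) in_inputs by fast
    next
      case False
      then have "k \<omega> = Some v"
        using kh(3) by (simp add: map_add_dom_app_simps)
      then show ?thesis
        using kh(1) unfolding total_histories_def by force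
    qed
  qed
  moreover have "inputs B \<omega> \<subseteq> inputs (continuations A B) \<omega>"
  proof
    fix v assume "v \<in> inputs B \<omega>"
    then obtain h where "h \<in> B" "h \<omega> = Some v"
      unfolding inputs_def by blast
    moreover obtain k where "k \<in> total_histories A"
      using total_histories_nonempty by auto
    ultimately have "k ++ h \<in> continuations A B" "(k ++ h) \<omega> = Some v"
      unfolding continuations_def by auto
    then show "v \<in> inputs (continuations A B) \<omega>"
      by (rule in_inputs)
  qed
  ultimately show ?thesis
    unfolding inputs_Un by blast
qed

lemma total_histories_continuations:
  "total_histories (A \<union> continuations A B) = total_histories (A \<union> B)"
  unfolding total_histories_def events_continuations inputs_continuations ..

lemma common_prefix_below:
  assumes "finite A" "free_choice A" "events A \<inter> events B = {}"
  shows "\<exists>k\<in>total_histories A. \<forall>g\<in>A \<union> continuations A B.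
    g \<subseteq>\<^sub>m e \<longrightarrow> g \<subseteq>\<^sub>m k \<or> (\<exists>h\<in>B. g = k ++ h)"
proof (cases "\<exists>k\<in>total_histories A. \<exists>h\<in>B. k ++ h \<subseteq>\<^sub>m e")
  case True
  then obtain k h where kh: "k \<in> total_histories A" "h \<in> B" "k ++ h \<subseteq>\<^sub>m e"
    by blast
  have ke: "k \<subseteq>\<^sub>m e"
    using map_le_map_add_left[OF dom_disjoint_if_total[OF kh(1,2) assms(3)]] kh(3)
    by (rule map_le_trans)
  have "g \<subseteq>\<^sub>m k \<or> (\<exists>h\<in>B. g = k ++ h)" if "g \<in> A \<union> continuations A B" "g \<subseteq>\<^sub>m e" for g
    using that(1)
  proof
    assume "g \<in> A"
    then show ?thesis
      using map_le_of_common_bound[OF that(2) ke] dom_subset_events dom_total_histories[OF kh(1)]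
      by blast
  next
    assume "g \<in> continuations A B"
    then obtain k1 h1 where g: "g = k1 ++ h1" "k1 \<in> total_histories A" "h1 \<in> B"
      unfolding continuations_def by blast
    have "k1 \<subseteq>\<^sub>m e"
      using map_le_map_add_left[OF dom_disjoint_if_total[OF g(2,3) assms(3)]] that(2) g(1)
      by (metis map_le_trans)
    then have "k1 = k"
      using total_histories_below_eq g(2) kh(1) ke by blast
    then show ?thesis
      using g by blast
  qed
  then show ?thesis
    using kh(1) by blast
next
  case False
  have "\<exists>k\<in>total_histories A. \<forall>g\<in>A. g \<subseteq>\<^sub>m e \<longrightarrow> g \<subseteq>\<^sub>m k"
    using total_upper_bound[OF assms(1,2)] .
  moreover have "g \<in> A" if "g \<in> A \<union> continuations A B" "g \<subseteq>\<^sub>m e" for g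
    using that False unfolding continuations_def by blast
  ultimately show ?thesis
    by blast
qed

lemma total_histories_continuations_subset_Ext:
  assumes "free_choice B" "events A \<inter> events B = {}"
  shows "total_histories (A \<union> continuations A B) \<subseteq> Ext (A \<union> continuations A B)"
proof
  fix t assume "t \<in> total_histories (A \<union> continuations A B)"
  then obtain a b where t: "t = a ++ b" and ab: "a \<in> total_histories A" "b \<in> total_histories B"
    unfolding total_histories_continuations total_histories_Un[OF assms(2)] by blast
  have "dom a \<inter> dom b = {}"
    using assms(2) dom_total_histories[OF ab(1)] dom_total_histories[OF ab(2)] by simp
  then have "a ++ b \<in> Ext ((++) a ` B)"
    using total_histories_subset_Ext[OF assms(1)] ab(2) by (intro Ext_map_add_image) blast
  moreover have "(++) a ` B \<subseteq> A \<union> continuations A B"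
    using ab(1) unfolding continuations_def by blast
  ultimately show "t \<in> Ext (A \<union> continuations A B)"
    using Ext_mono t by blast
qed

lemma free_choice_continuations:
  assumes "finite A" "finite B" "free_choice A" "free_choice B" "events A \<inter> events B = {}"
  shows "free_choice (A \<union> continuations A B)"
  using total_histories_continuations_subset_Ext[OF assms(4,5)]
proof (rule free_choiceI)
  let ?S = "A \<union> continuations A B"
  fix e assume e: "e \<in> Ext ?S"
  obtain k where k: "k \<in> total_histories A"
    and below: "\<forall>g\<in>?S. g \<subseteq>\<^sub>m e \<longrightarrow> g \<subseteq>\<^sub>m k \<or> (\<exists>h\<in>B. g = k ++ h)"
    using common_prefix_below[OF assms(1,3,5)] by blast
  obtain t where t: "t \<in> total_histories B" "\<forall>h\<in>B. h \<subseteq>\<^sub>m e \<longrightarrow> h \<subseteq>\<^sub>m t"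
    using total_upper_bound[OF assms(2,4)] by blast
  have disj: "dom k \<inter> dom t = {}"
    using assms(5) dom_total_histories[OF k] dom_total_histories[OF t(1)] by simp
  have "g \<subseteq>\<^sub>m k ++ t" if g: "g \<in> ?S" "g \<subseteq>\<^sub>m e" for g
  proof -
    consider "g \<subseteq>\<^sub>m k" | h where "h \<in> B" "g = k ++ h"
      using below g by blast
    then show ?thesis
    proof cases
      case 1
      then show ?thesis
        using map_le_map_add_left[OF disj] by (rule map_le_trans)
    next
      case 2
      then have "h \<subseteq>\<^sub>m t"
        using t(2) g(2) map_le_trans[OF map_le_map_add] by blast
      moreover have "dom k \<inter> dom h = {}"
        using dom_disjoint_if_total[OF k 2(1) assms(5)] .
      ultimately show ?thesis
        using 2(2) map_add_le_map_add_iff[OF _ disj] by simp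
    qed
  qed
  then have "e \<subseteq>\<^sub>m k ++ t"
    using map_le_iff_Ext_below[OF e] by blast
  moreover have "k ++ t \<in> total_histories ?S"
    unfolding total_histories_continuations total_histories_Un[OF assms(5)] using k t(1) by blast
  ultimately show "\<exists>t\<in>total_histories ?S. e \<subseteq>\<^sub>m t"
    by blast
qed

lemma tips_map_add_Ext:
  assumes "k \<in> Ext A" "dom k = events A" "dom k \<inter> dom h = {}" "dom h \<noteq> {}"
  shows "tips A (k ++ h) = dom h"
proof -
  let ?U = "\<Union>g\<in>{g\<in>A. g \<subseteq>\<^sub>m k ++ h \<and> g \<noteq> k ++ h}. dom g"
  have "?U \<subseteq> dom k"
    using dom_subset_events assms(2) by (intro UN_least) auto
  moreover have "dom k \<subseteq> ?U"
  proof
    fix \<omega> assume "\<omega> \<in> dom k"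
    then obtain g where g: "g \<in> A" "g \<subseteq>\<^sub>m k" "\<omega> \<in> dom g"
      using assms(1) unfolding Ext_iff by blast
    have "g \<subseteq>\<^sub>m k ++ h"
      using g(2) map_le_map_add_left[OF assms(3)] by (rule map_le_trans)
    moreover have "g \<noteq> k ++ h"
    proof
      assume "g = k ++ h"
      then have "dom h \<subseteq> dom k"
        using map_le_implies_dom_le[OF g(2)] by auto
      then show False
        using assms(3,4) by blast
    qed
    ultimately show "\<omega> \<in> ?U"
      using g by blast
  qed
  ultimately show ?thesis
    unfolding tips_eq using assms(3) by auto
qed

lemma tips_map_add_image:
  assumes "dom k \<inter> events B = {}" "h \<in> B"
  shows "tips ((++) k ` B) (k ++ h) - dom k = tips B h"
proof -
  have disj: "dom k \<inter> dom g = {}" if "g \<in> B" for g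
    using assms(1) dom_subset_events[OF that] by blast
  have le_iff: "k ++ g \<subseteq>\<^sub>m k ++ g' \<longleftrightarrow> g \<subseteq>\<^sub>m g'" if "g \<in> B" "g' \<in> B" for g g'
    using map_add_le_map_add_iff[OF disj[OF that(1)] disj[OF that(2)]] .
  have eq_iff: "k ++ g = k ++ h \<longleftrightarrow> g = h" if "g \<in> B" for g
    using le_iff[OF that assms(2)] le_iff[OF assms(2) that] by (metis map_le_antisym map_le_refl)
  have "{g\<in>(++) k ` B. g \<subseteq>\<^sub>m k ++ h \<and> g \<noteq> k ++ h} = (++) k ` {g\<in>B. g \<subseteq>\<^sub>m h \<and> g \<noteq> h}"
    using le_iff[OF _ assms(2)] eq_iff by auto
  then have "tips ((++) k ` B) (k ++ h) =
      (dom h \<union> dom k) - (\<Union>g\<in>{g\<in>B. g \<subseteq>\<^sub>m h \<and> g \<noteq> h}. dom g \<union> dom k)"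
    unfolding tips_eq by simp
  moreover have "(\<Union>g\<in>{g\<in>B. g \<subseteq>\<^sub>m h \<and> g \<noteq> h}. dom g \<union> dom k) - dom k =
      (\<Union>g\<in>{g\<in>B. g \<subseteq>\<^sub>m h \<and> g \<noteq> h}. dom g) - dom k"
    by auto
  ultimately show ?thesis
    unfolding tips_eq using disj[OF assms(2)] by auto
qed

lemma tips_continuations_left:
  assumes "h \<in> A"
  shows "tips (A \<union> continuations A B) h = tips A h"
proof (intro tips_Un_eq_left tips_eq_dom)
  fix g assume g: "g \<in> continuations A B" "g \<subseteq>\<^sub>m h" "g \<noteq> h"
  then obtain k h' where "g = k ++ h'" "k \<in> total_histories A"
    unfolding continuations_def by blast
  then have "dom h \<subseteq> dom g"
    using dom_subset_events[OF assms] dom_total_histories[of k A] by auto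
  then show "dom g = {}"
    using map_le_antisym_dom g(2,3) by blast
qed

lemma tips_continuations_right:
  assumes "join_prime B" "free_choice A" "events A \<inter> events B = {}"
    and "k \<in> total_histories A" "h \<in> B"
  shows "tips (A \<union> continuations A B) (k ++ h) = tips B h"
proof -
  have disj: "dom k \<inter> dom h = {}"
    using dom_disjoint_if_total[OF assms(4,5,3)] .
  have "dom h \<noteq> {}"
    using join_prime_imp_empty_notin[OF assms(1)] assms(5) by auto
  then have tips_A: "tips A (k ++ h) = dom h"
    using total_histories_subset_Ext[OF assms(2)] assms(4) dom_total_histories[OF assms(4)] disj
    by (intro tips_map_add_Ext) auto
  have "{g\<in>continuations A B. g \<subseteq>\<^sub>m k ++ h} = {g\<in>(++) k ` B. g \<subseteq>\<^sub>m k ++ h}"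
  proof (intro equalityI subsetI)
    fix g assume "g \<in> {g\<in>continuations A B. g \<subseteq>\<^sub>m k ++ h}"
    then obtain k1 h1 where g: "g = k1 ++ h1" "k1 \<in> total_histories A" "h1 \<in> B" "g \<subseteq>\<^sub>m k ++ h"
      unfolding continuations_def by blast
    have "k1 \<subseteq>\<^sub>m k ++ h"
      using map_le_map_add_left[OF dom_disjoint_if_total[OF g(2,3) assms(3)]] g(1,4)
      by (metis map_le_trans)
    then have "k1 = k"
      using total_histories_below_eq g(2) assms(4) map_le_map_add_left[OF disj] by blast
    then show "g \<in> {g\<in>(++) k ` B. g \<subseteq>\<^sub>m k ++ h}"
      using g by blast
  qed (use assms(4) in \<open>auto simp: continuations_def\<close>)
  then have "tips (continuations A B) (k ++ h) = tips ((++) k ` B) (k ++ h)"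
    by (rule tips_cong_below)
  moreover have "tips ((++) k ` B) (k ++ h) - dom k = tips B h"
    using assms(3,5) dom_total_histories[OF assms(4)] by (intro tips_map_add_image) auto
  moreover have "tips ((++) k ` B) (k ++ h) \<subseteq> dom h \<union> dom k"
    using tips_subset_dom[of "(++) k ` B" "k ++ h"] by simp
  ultimately show ?thesis
    unfolding tips_Un tips_A using disj by blast
qed

lemma causally_complete_continuations:
  assumes "finite A" "finite B" "join_prime B" "causally_complete A" "causally_complete B"
    and "events A \<inter> events B = {}"
  shows "causally_complete (A \<union> continuations A B)"
proof -
  have fc: "free_choice A" "free_choice B"
    using assms(4,5) unfolding causally_complete_def by simp_all
  have "card (tips (A \<union> continuations A B) h) = 1" if "h \<in> A \<union> continuations A B" for h
    using that
  proof
    assume "h \<in> A"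
    then show ?thesis
      using tips_continuations_left[of h A B] assms(4) unfolding causally_complete_def by simp
  next
    assume "h \<in> continuations A B"
    then obtain k h' where "h = k ++ h'" "k \<in> total_histories A" "h' \<in> B"
      unfolding continuations_def by blast
    then show ?thesis
      using tips_continuations_right[OF assms(3) fc(1) assms(6)] assms(5)
      unfolding causally_complete_def by simp
  qed
  then show ?thesis
    using free_choice_continuations[OF assms(1,2) fc assms(6)] unfolding causally_complete_def by simp
qed

theorem proposition17:
  fixes \<Theta> \<Theta>' :: "('e \<rightharpoonup> 'v) set"
  assumes "space_of_input_histories \<Theta>" and "space_of_input_histories \<Theta>'"
    and "causally_complete \<Theta>" and "causally_complete \<Theta>'"
    and "events \<Theta> \<inter> events \<Theta>' = {}"
  shows "causally_complete (par_comp \<Theta> \<Theta>') \<and> causally_complete (seq_comp \<Theta> \<Theta>')"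
proof
  have spaces: "finite \<Theta>" "finite \<Theta>'" "join_prime \<Theta>'"
    using assms(1,2) unfolding space_of_input_histories_def by simp_all
  show "causally_complete (par_comp \<Theta> \<Theta>')"
    unfolding par_comp_def using causally_complete_Un[OF spaces(1,2) assms(3-5)] .
  have "seq_comp \<Theta> \<Theta>' = \<Theta> \<union> continuations \<Theta> \<Theta>'"
    using assms(3,5) unfolding causally_complete_def by (intro seq_comp_eq) simp_all
  then show "causally_complete (seq_comp \<Theta> \<Theta>')"
    using causally_complete_continuations[OF spaces assms(3-5)] by simp
qed

end
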